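(* Let $H$ be an abelian group with an alternating $\mathbb{Z}$-bilinear form $\langle-,-\rangle$, and let $z\in H\setminus\ker\mu$. Then $H_2(\mathbb{Q}[H])_{(z)}=0$.
   Context: $\mu:H\to\mathrm{Hom}_{\mathbb{Z}}(H,\mathbb{Z})$, $\mu(x)(y)=\langle x,y\rangle$. $\mathbb{Q}[H]$ is the $\mathbb{Q}$-vector space with basis symbols $[x]$, $x\in H$, with Lie bracket $[[x],[y]]=\langle x,y\rangle[x+y]$. Chevalley–Eilenberg complex $C_p(\mathbb{Q}[H])=\bigwedge^p_{\mathbb{Q}}\mathbb{Q}[H]$, $\partial(x_1\wedge\cdots\wedge x_p)=\sum_{i<j}(-1)^{i+j}[x_i,x_j]\wedge x_1\wedge\cdots\widehat{x_i}\cdots\widehat{x_j}\cdots\wedge x_p$. For $p>0$, $C_p(\mathbb{Q}[H])_{(z)}$ is the span of $[u_1]\wedge\cdots\wedge[u_p]$ with $u_1+\cdots+u_p=z$; it is a subcomplex, and $H_p(\mathbb{Q}[H])_{(z)}$ denotes its homology. *)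

theory Defs
  imports Complex_Main
begin

definition alt_bilinear :: "('a::ab_group_add \<Rightarrow> 'a \<Rightarrow> int) \<Rightarrow> bool" where
  "alt_bilinear B \<longleftrightarrow>
     (\<forall>x y w. B (x + y) w = B x w + B y w) \<and>
     (\<forall>x y w. B x (y + w) = B x y + B x w) \<and>
     (\<forall>x. B x x = 0)"

text \<open>A p-chain of the Chevalley-Eilenberg complex of Q[H] is given by a
 finitely supported coefficient function c on p-tuples, representing the element
 sum of c(u1,...,up) [u1] wedge ... wedge [up] of the exterior power.\<close>

definition supp :: "('b \<Rightarrow> rat) \<Rightarrow> 'b set" where
  "supp c = {p. c p \<noteq> 0}"

text \<open>Two representatives in degree 2 define the same element of the exterior square
 iff their antisymmetrizations agree.\<close>
definition alt2 :: "('a \<times> 'a \<Rightarrow> rat) \<Rightarrow> ('a \<times> 'a \<Rightarrow> rat)" where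
  "alt2 c = (\<lambda>(x, y). c (x, y) - c (y, x))"

text \<open>Boundary C_2 -> C_1: d([x] wedge [y]) = (-1)^(1+2) <x,y> [x+y].\<close>
definition bd2 :: "('a::ab_group_add \<Rightarrow> 'a \<Rightarrow> int) \<Rightarrow> ('a \<times> 'a \<Rightarrow> rat) \<Rightarrow> ('a \<Rightarrow> rat)" where
  "bd2 B c = (\<lambda>w. \<Sum>p\<in>{p \<in> supp c. fst p + snd p = w}.
                   - c p * of_int (B (fst p) (snd p)))"

definition bd3 :: "('a::ab_group_add \<Rightarrow> 'a \<Rightarrow> int) \<Rightarrow> ('a \<times> 'a \<times> 'a \<Rightarrow> rat) \<Rightarrow> ('a \<times> 'a \<Rightarrow> rat)" where
  "bd3 B d = (\<lambda>(a, b). \<Sum>q\<in>supp d. (case q of (x1, x2, x3) \<Rightarrow>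
       d q * ( - (if x1 + x2 = a \<and> x3 = b then of_int (B x1 x2) else 0)
               + (if x1 + x3 = a \<and> x2 = b then of_int (B x1 x3) else 0)
               - (if x2 + x3 = a \<and> x1 = b then of_int (B x2 x3) else 0))))"

definition chain2_z :: "'a::ab_group_add \<Rightarrow> ('a \<times> 'a \<Rightarrow> rat) \<Rightarrow> bool" where
  "chain2_z z c \<longleftrightarrow> finite (supp c) \<and> (\<forall>(x, y)\<in>supp c. x + y = z)"

definition chain3_z :: "'a::ab_group_add \<Rightarrow> ('a \<times> 'a \<times> 'a \<Rightarrow> rat) \<Rightarrow> bool" where
  "chain3_z z d \<longleftrightarrow> finite (supp d) \<and> (\<forall>(x, y, w)\<in>supp d. x + y + w = z)"

definition H2_z_vanishes :: "('a::ab_group_add \<Rightarrow> 'a \<Rightarrow> int) \<Rightarrow> 'a \<Rightarrow> bool" where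
  "H2_z_vanishes B z \<longleftrightarrow>
     (\<forall>c. chain2_z z c \<and> bd2 B c = (\<lambda>_. 0) \<longrightarrow>
        (\<exists>d. chain3_z z d \<and> alt2 (bd3 B d) = alt2 c))"

end

theory Submission
  imports Defs
begin

text \<open>Fix \<open>y\<^sub>0\<close> with \<open>\<tau>(y\<^sub>0) \<noteq> 0\<close>, where \<open>\<tau>(w) = \<langle>w,z\<rangle>\<close>.
  The weight-\<open>z\<close> 2-chains are spanned by \<open>e\<^sub>w = [w] \<and> [z - w]\<close>, and a chain
  \<open>\<Sum> c\<^sub>w e\<^sub>w\<close> is a cycle iff \<open>\<Sum> c\<^sub>w \<tau>(w) = 0\<close>; hence the cycles are spanned by
  \<open>D\<^sub>w = e\<^sub>w - \<tau>(w)/\<tau>(y\<^sub>0) e\<^sub>y\<^sub>0\<close>. The boundary of \<open>[x] \<and> [y] \<and> [z - x - y]\<close> is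
  \<open>(\<tau>(y) + m) D\<^sub>x + (m - \<tau>(x)) D\<^sub>y - m D\<^sub>x\<^sub>+\<^sub>y\<close> with \<open>m = \<langle>x,y\<rangle>\<close>, and a few instances
  of this relation, chosen according to which of \<open>\<tau>(x)\<close>, \<open>\<tau>(x) + \<tau>(y\<^sub>0)\<close> and
  \<open>\<tau>(y\<^sub>0) + \<langle>x,y\<^sub>0\<rangle>\<close> vanish, show that every \<open>D\<^sub>x\<close> is a boundary.\<close>

lemma alt_bilinear_add_left: "alt_bilinear B \<Longrightarrow> B (x + y) w = B x w + B y w"
  and alt_bilinear_add_right: "alt_bilinear B \<Longrightarrow> B x (y + w) = B x y + B x w"
  and alt_bilinear_self: "alt_bilinear B \<Longrightarrow> B x x = 0"
  unfolding alt_bilinear_def by blast+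

lemma alt_bilinear_zero_left: "alt_bilinear B \<Longrightarrow> B 0 w = 0"
  using alt_bilinear_add_left[of B 0 0 w] by simp

lemma alt_bilinear_zero_right: "alt_bilinear B \<Longrightarrow> B x 0 = 0"
  using alt_bilinear_add_right[of B x 0 0] by simp

lemma alt_bilinear_minus_left: "alt_bilinear B \<Longrightarrow> B (- x) w = - B x w"
  using alt_bilinear_add_left[of B x "- x" w] alt_bilinear_zero_left[of B w] by simp

lemma alt_bilinear_minus_right: "alt_bilinear B \<Longrightarrow> B x (- w) = - B x w"
  using alt_bilinear_add_right[of B x w "- w"] alt_bilinear_zero_right[of B x] by simp

lemma alt_bilinear_diff_left: "alt_bilinear B \<Longrightarrow> B (x - y) w = B x w - B y w"
  using alt_bilinear_add_left[of B x "- y" w] alt_bilinear_minus_left[of B y w] by simp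

lemma alt_bilinear_diff_right: "alt_bilinear B \<Longrightarrow> B x (y - w) = B x y - B x w"
  using alt_bilinear_add_right[of B x y "- w"] alt_bilinear_minus_right[of B x w] by simp

lemma alt_bilinear_skew: "alt_bilinear B \<Longrightarrow> B y x = - B x y"
  using alt_bilinear_self[of B "x + y"] alt_bilinear_self[of B x] alt_bilinear_self[of B y]
  by (simp add: alt_bilinear_add_left alt_bilinear_add_right)

lemmas alt_bilinear_simps = alt_bilinear_add_left alt_bilinear_add_right alt_bilinear_self
  alt_bilinear_zero_left alt_bilinear_zero_right alt_bilinear_minus_left alt_bilinear_minus_right
  alt_bilinear_diff_left alt_bilinear_diff_right

definition bd3_kernel :: "('a::ab_group_add \<Rightarrow> 'a \<Rightarrow> int) \<Rightarrow> 'a \<times> 'a \<times> 'a \<Rightarrow> 'a \<times> 'a \<Rightarrow> rat" where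
  "bd3_kernel B = (\<lambda>(x1, x2, x3) p.
       - (if p = (x1 + x2, x3) then of_int (B x1 x2) else 0)
       + (if p = (x1 + x3, x2) then of_int (B x1 x3) else 0)
       - (if p = (x2 + x3, x1) then of_int (B x2 x3) else 0))"

lemma bd3_kernel_Pair:
  "bd3_kernel B (x1, x2, x3) (a, b) =
       - (if x1 + x2 = a \<and> x3 = b then of_int (B x1 x2) else 0)
       + (if x1 + x3 = a \<and> x2 = b then of_int (B x1 x3) else 0)
       - (if x2 + x3 = a \<and> x1 = b then of_int (B x2 x3) else 0)"
  unfolding bd3_kernel_def by (simp only: prod.case prod.inject eq_commute[of a] eq_commute[of b])

lemma bd3_eq_sum_kernel:
  assumes "finite A" "supp d \<subseteq> A"
  shows "bd3 B d p = (\<Sum>q\<in>A. d q * bd3_kernel B q p)"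
proof -
  obtain a b where p: "p = (a, b)" by fastforce
  have "bd3 B d p = (\<Sum>q\<in>supp d. d q * bd3_kernel B q p)"
    unfolding p bd3_def prod.case
    by (rule sum.cong) (auto simp only: bd3_kernel_Pair split: prod.split)
  also have "\<dots> = (\<Sum>q\<in>A. d q * bd3_kernel B q p)"
    using assms by (intro sum.mono_neutral_left) (auto simp: supp_def)
  finally show ?thesis .
qed

lemma bd3_lincomb:
  assumes "finite (supp d1)" "finite (supp d2)"
  shows "bd3 B (\<lambda>q. r * d1 q + s * d2 q) p = r * bd3 B d1 p + s * bd3 B d2 p"
proof -
  let ?A = "supp d1 \<union> supp d2"
  have "finite ?A" using assms by simp
  moreover have "supp (\<lambda>q. r * d1 q + s * d2 q) \<subseteq> ?A" by (auto simp: supp_def)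
  ultimately show ?thesis
    by (simp add: bd3_eq_sum_kernel[of ?A] sum_distrib_left sum.distrib algebra_simps)
qed

definition boundary2_z :: "('a::ab_group_add \<Rightarrow> 'a \<Rightarrow> int) \<Rightarrow> 'a \<Rightarrow> ('a \<times> 'a \<Rightarrow> rat) \<Rightarrow> bool" where
  "boundary2_z B z f \<longleftrightarrow> (\<exists>d. chain3_z z d \<and> alt2 (bd3 B d) = f)"

lemma H2_z_vanishes_iff:
  "H2_z_vanishes B z \<longleftrightarrow> (\<forall>c. chain2_z z c \<and> bd2 B c = (\<lambda>_. 0) \<longrightarrow> boundary2_z B z (alt2 c))"
  unfolding H2_z_vanishes_def boundary2_z_def by blast

lemma boundary2_z_zero: "boundary2_z B z (\<lambda>p. 0)"
proof -
  have "bd3 B (\<lambda>q. 0) p = 0" for p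
    using bd3_eq_sum_kernel[of "{}" "\<lambda>q. 0"] by (simp add: supp_def)
  then have "alt2 (bd3 B (\<lambda>q. 0)) = (\<lambda>p. 0)"
    by (simp add: alt2_def fun_eq_iff)
  moreover have "chain3_z z (\<lambda>q. 0)" by (simp add: chain3_z_def supp_def)
  ultimately show ?thesis unfolding boundary2_z_def by blast
qed

lemma boundary2_z_lincomb:
  assumes "boundary2_z B z f" "boundary2_z B z g" "\<And>p. h p = r * f p + s * g p"
  shows "boundary2_z B z h"
proof -
  obtain d1 d2 where d: "chain3_z z d1" "alt2 (bd3 B d1) = f" "chain3_z z d2" "alt2 (bd3 B d2) = g"
    using assms(1,2) unfolding boundary2_z_def by blast
  let ?d = "\<lambda>q. r * d1 q + s * d2 q"
  have fin: "finite (supp d1)" "finite (supp d2)" using d by (simp_all add: chain3_z_def)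
  have sub: "supp ?d \<subseteq> supp d1 \<union> supp d2" by (auto simp: supp_def)
  have "chain3_z z ?d"
    unfolding chain3_z_def
  proof
    show "finite (supp ?d)" using finite_subset[OF sub] fin by simp
    show "\<forall>(x, y, w)\<in>supp ?d. x + y + w = z"
      using sub d(1,3) unfolding chain3_z_def by fastforce
  qed
  moreover have "alt2 (bd3 B ?d) = h"
  proof
    fix p :: "'a \<times> 'a"
    show "alt2 (bd3 B ?d) p = h p"
      unfolding assms(3) d(2,4)[symmetric]
      by (cases p) (simp add: alt2_def bd3_lincomb[OF fin] algebra_simps)
  qed
  ultimately show ?thesis unfolding boundary2_z_def by blast
qed

lemma boundary2_z_cong: "boundary2_z B z f \<Longrightarrow> (\<And>p. g p = f p) \<Longrightarrow> boundary2_z B z g"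
  by (rule boundary2_z_lincomb[where r = 1 and s = 0, OF _ boundary2_z_zero]) simp_all

lemma boundary2_z_sum:
  assumes "finite A" "\<And>i. i \<in> A \<Longrightarrow> boundary2_z B z (f i)"
  shows "boundary2_z B z (\<lambda>p. \<Sum>i\<in>A. r i * f i p)"
  using assms
proof (induction A rule: finite_induct)
  case empty
  then show ?case using boundary2_z_zero by simp
next
  case (insert a A)
  then have "boundary2_z B z (f a)" "boundary2_z B z (\<lambda>p. \<Sum>i\<in>A. r i * f i p)" by simp_all
  then show ?case by (rule boundary2_z_lincomb[where r = "r a" and s = 1]) (simp add: insert.hyps)
qed

lemma boundary2_z_cancel:
  assumes "boundary2_z B z f" "boundary2_z B z g" "\<alpha> \<noteq> 0" "\<And>p. f p = \<alpha> * h p + \<beta> * g p"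
  shows "boundary2_z B z h"
proof (rule boundary2_z_lincomb[OF assms(1,2)])
  fix p
  show "h p = 1 / \<alpha> * f p + - \<beta> / \<alpha> * g p"
    using assms(3) by (simp add: assms(4) field_simps)
qed

text \<open>The antisymmetrized representative of \<open>[w] \<and> [z - w]\<close>.\<close>

definition wedge2 :: "'a::ab_group_add \<Rightarrow> 'a \<Rightarrow> 'a \<times> 'a \<Rightarrow> rat" where
  "wedge2 z w p = (if p = (w, z - w) then 1 else 0) - (if p = (z - w, w) then 1 else 0)"

lemma chain2_z_snd: "chain2_z z c \<Longrightarrow> q \<in> supp c \<Longrightarrow> q = (fst q, z - fst q)"
  unfolding chain2_z_def by (cases q) (auto simp: algebra_simps)

lemma alt2_eq_sum_wedge2:
  assumes c: "chain2_z z c"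
  shows "alt2 c p = (\<Sum>q\<in>supp c. c q * wedge2 z (fst q) p)"
proof -
  obtain u v where p: "p = (u, v)" by fastforce
  have fin: "finite (supp c)" using c by (simp add: chain2_z_def)
  have "c q * wedge2 z (fst q) p = (if q = p then c q else 0) - (if q = (v, u) then c q else 0)"
    if "q \<in> supp c" for q
    using chain2_z_snd[OF c that] by (cases q) (auto simp: wedge2_def p)
  then have "(\<Sum>q\<in>supp c. c q * wedge2 z (fst q) p)
      = (\<Sum>q\<in>supp c. if q = p then c q else 0) - (\<Sum>q\<in>supp c. if q = (v, u) then c q else 0)"
    by (simp add: sum_subtractf[symmetric])
  also have "\<dots> = c p - c (v, u)"
    using fin by (simp add: sum.delta' supp_def)
  finally show ?thesis by (simp add: p alt2_def)
qed

lemma alt2_apply: "alt2 f p = f p - f (snd p, fst p)"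
  by (cases p) (simp add: alt2_def)

lemma swap_eq_Pair_iff: "(snd p, fst p) = (x, y) \<longleftrightarrow> p = (y, x)"
  by (cases p) auto

lemma boundary2_z_triple:
  assumes B: "alt_bilinear B" and abc: "a + b + c = z"
  shows "boundary2_z B z
           (\<lambda>p. of_int (B b c) * wedge2 z a p + of_int (B c a) * wedge2 z b p + of_int (B a b) * wedge2 z c p)"
proof -
  let ?d = "\<lambda>q. if q = (a, b, c) then 1 else 0 :: rat"
  have supp: "supp ?d = {(a, b, c)}" by (auto simp: supp_def)
  then have "chain3_z z ?d" using abc by (simp add: chain3_z_def)
  moreover have "alt2 (bd3 B ?d) p = of_int (B b c) * wedge2 z a p + of_int (B c a) * wedge2 z b p
                     + of_int (B a b) * wedge2 z c p" for p
  proof -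
    have z: "z - a = b + c" "z - b = a + c" "z - c = a + b" using abc by (auto simp: algebra_simps)
    have ite: "(if P then x else 0) = of_bool P * x" for P and x :: rat
      by simp
    have K: "bd3 B ?d q = bd3_kernel B (a, b, c) q" for q
      by (simp add: bd3_eq_sum_kernel[OF _ equalityD1[OF supp]])
    show ?thesis
      unfolding alt2_apply K bd3_kernel_def prod.case wedge2_def z swap_eq_Pair_iff
        alt_bilinear_skew[OF B, of c a] of_int_minus
      unfolding ite by algebra
  qed
  ultimately show ?thesis unfolding boundary2_z_def by blast
qed

subsection \<open>Basic cycles\<close>

locale weight_z_nondegenerate =
  fixes B :: "'a::ab_group_add \<Rightarrow> 'a \<Rightarrow> int" and z y0 :: 'a
  assumes alt_bilinear: "alt_bilinear B" and nondegenerate: "B z y0 \<noteq> 0"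
begin

abbreviation boundary :: "('a \<times> 'a \<Rightarrow> rat) \<Rightarrow> bool" where
  "boundary \<equiv> boundary2_z B z"

definition tau :: "'a \<Rightarrow> rat" where
  "tau w = of_int (B w z)"

lemmas bilinear_simps = alt_bilinear_simps[OF alt_bilinear]

lemma tau_add: "tau (x + y) = tau x + tau y"
  and tau_minus: "tau (- x) = - tau x"
  and tau_z: "tau z = 0"
  by (simp_all add: tau_def bilinear_simps)

lemma tau_y0_nonzero: "tau y0 \<noteq> 0"
  using nondegenerate alt_bilinear_skew[OF alt_bilinear, of z y0] by (simp add: tau_def)

text \<open>\<open>cyc w\<close> is the cycle \<open>D\<^sub>w\<close>; \<open>cyc_relation\<close> is the boundary of \<open>[x] \<and> [y] \<and> [z - x - y]\<close>.\<close>

definition cyc :: "'a \<Rightarrow> 'a \<times> 'a \<Rightarrow> rat" where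
  "cyc w p = wedge2 z w p - tau w * (wedge2 z y0 p / tau y0)"

lemma cyc_relation:
  "boundary (\<lambda>p. (tau y + of_int (B x y)) * cyc x p + (of_int (B x y) - tau x) * cyc y p
                  - of_int (B x y) * cyc (x + y) p)"
proof -
  have "x + y + (z - x - y) = z" by (simp add: algebra_simps)
  note triple = boundary2_z_triple[OF alt_bilinear this]
  have coeffs: "of_int (B y (z - x - y)) = tau y + of_int (B x y)"
    "of_int (B (z - x - y) x) = of_int (B x y) - tau x"
    using alt_bilinear_skew[OF alt_bilinear, of x y] alt_bilinear_skew[OF alt_bilinear, of x z]
    by (simp_all add: tau_def bilinear_simps)
  have wedge: "wedge2 z (z - x - y) p = - wedge2 z (x + y) p" for p
    by (auto simp: wedge2_def algebra_simps)
  show ?thesis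
    by (rule boundary2_z_cong[OF triple]) (simp only: coeffs wedge cyc_def tau_add; algebra)
qed

lemma cyc_y0_eq_0: "cyc y0 p = 0"
  by (simp add: cyc_def tau_y0_nonzero)

lemma cyc_y0: "boundary (cyc y0)"
  by (rule boundary2_z_cong[OF boundary2_z_zero]) (simp add: cyc_y0_eq_0)

lemma cyc_add_z:
  assumes "boundary (cyc x)" "tau x \<noteq> 0"
  shows "boundary (cyc (x + z))"
proof (rule boundary2_z_cancel[OF cyc_relation[where x = x and y = z] assms(1), where \<beta> = "tau x"])
  show "- tau x \<noteq> 0" using assms(2) by simp
qed (simp add: tau_def[symmetric] tau_z)

lemma cyc_uminus:
  assumes "boundary (cyc x)" "tau x \<noteq> 0"
  shows "boundary (cyc (- x))"
proof (rule boundary2_z_cancel[OF cyc_relation[where x = x and y = "- x"] assms(1), where \<beta> = "- tau x"])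
  show "- tau x \<noteq> 0" using assms(2) by simp
qed (simp add: bilinear_simps tau_minus)

lemma cyc_transfer:
  assumes y: "boundary (cyc y)" "tau y \<noteq> 0" and x: "tau x \<noteq> 0" "tau x + tau y \<noteq> 0"
  shows "boundary (cyc x)"
proof -
  define m where "m = (of_int (B x y) :: rat)"
  have "of_int (B x (y + z)) = m + tau x" "of_int (B (x + z) y) = m - tau y"
    using alt_bilinear_skew[OF alt_bilinear, of y z] by (simp_all add: m_def tau_def bilinear_simps)
  note coeffs = this tau_add tau_z
  have "boundary (\<lambda>p. (tau y + m + tau x) * cyc x p - (m + tau x) * cyc (x + y + z) p)"
    by (rule boundary2_z_lincomb[OF cyc_relation[where x = x and y = "y + z"] cyc_add_z[OF y],
          where r = 1 and s = "- m"]) (simp add: coeffs add.assoc algebra_simps)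
  moreover have "boundary (\<lambda>p. m * cyc (x + z) p - (m - tau y) * cyc (x + y + z) p)"
    by (rule boundary2_z_lincomb[OF cyc_relation[where x = "x + z" and y = y] y(1),
          where r = 1 and s = "- (m - tau y - tau x)"]) (simp add: coeffs add_ac algebra_simps)
  \<comment> \<open>eliminate \<open>cyc (x + y + z)\<close>; then \<open>cyc (x + z)\<close> via the relation for \<open>(x, z)\<close>\<close>
  ultimately have "boundary (\<lambda>p. - (tau y * (tau y + tau x)) * cyc x p
                               + (m + tau x) * m * (cyc x p - cyc (x + z) p))"
    by (rule boundary2_z_lincomb[where r = "m - tau y" and s = "- (m + tau x)"]) algebra
  moreover have "boundary (\<lambda>p. cyc x p - cyc (x + z) p)"
    by (rule boundary2_z_cancel[OF cyc_relation[where x = x and y = z] boundary2_z_zero,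
          where \<alpha> = "tau x" and \<beta> = 0]) (simp_all add: x coeffs tau_def[symmetric] algebra_simps)
  ultimately show ?thesis
  proof (rule boundary2_z_cancel[where \<alpha> = "- (tau y * (tau y + tau x))" and \<beta> = "(m + tau x) * m"])
    show "- (tau y * (tau y + tau x)) \<noteq> 0" using x y(2) by (simp add: add.commute)
  qed simp
qed

lemma cyc_boundary_if_tau_nonzero:
  assumes "tau x \<noteq> 0"
  shows "boundary (cyc x)"
proof (cases "tau x + tau y0 = 0")
  case False
  then show ?thesis using cyc_transfer[OF cyc_y0 tau_y0_nonzero assms] by simp
next
  case True
  then show ?thesis
    using cyc_transfer[OF cyc_uminus[OF cyc_y0 tau_y0_nonzero] _ assms] tau_y0_nonzero
    by (simp add: tau_minus)
qed

lemma cyc_boundary: "boundary (cyc x)"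
proof (cases "tau x = 0")
  case False
  then show ?thesis by (rule cyc_boundary_if_tau_nonzero)
next
  case tau_x: True
  define m where "m = (of_int (B x y0) :: rat)"
  show ?thesis
  proof (cases "tau y0 + m = 0")
    case False
    have "boundary (cyc (x + y0))"
      by (rule cyc_boundary_if_tau_nonzero) (simp add: tau_add tau_x tau_y0_nonzero)
    with cyc_relation[where x = x and y = y0] show ?thesis
    proof (rule boundary2_z_cancel[where \<alpha> = "tau y0 + m" and \<beta> = "- m"])
      show "tau y0 + m \<noteq> 0" by (fact False)
    qed (simp add: m_def tau_x cyc_y0_eq_0)
  next
    case True
    have coeff: "of_int (B (x - y0) y0) = m" by (simp add: m_def bilinear_simps)
    show ?thesis
    proof (rule boundary2_z_cancel[OF cyc_relation[where x = "x - y0" and y = y0] boundary2_z_zero,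
          where \<alpha> = "- m" and \<beta> = 0])
      show "- m \<noteq> 0" using True tau_y0_nonzero by auto
    qed (simp add: coeff True cyc_y0_eq_0)
  qed
qed

lemma cycle_weighted_sum_eq_0:
  assumes "chain2_z z c" "bd2 B c = (\<lambda>_. 0)"
  shows "(\<Sum>q\<in>supp c. c q * tau (fst q)) = 0"
proof -
  have "{q \<in> supp c. fst q + snd q = z} = supp c"
    using assms(1) by (auto simp: chain2_z_def)
  moreover have "of_int (B (fst q) (snd q)) = tau (fst q)" if "q \<in> supp c" for q
    using chain2_z_snd[OF assms(1) that] by (cases q) (simp add: tau_def bilinear_simps)
  ultimately have "bd2 B c z = - (\<Sum>q\<in>supp c. c q * tau (fst q))"
    by (simp add: bd2_def sum_negf)
  then show ?thesis using assms(2) by simp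
qed

lemma cycle_boundary:
  assumes "chain2_z z c" "bd2 B c = (\<lambda>_. 0)"
  shows "boundary (alt2 c)"
proof (rule boundary2_z_cong)
  have "finite (supp c)" using assms(1) by (simp add: chain2_z_def)
  then show "boundary (\<lambda>p. \<Sum>q\<in>supp c. c q * cyc (fst q) p)"
    by (rule boundary2_z_sum) (rule cyc_boundary)
  fix p
  let ?k = "wedge2 z y0 p / tau y0"
  have "(\<Sum>q\<in>supp c. c q * cyc (fst q) p)
      = (\<Sum>q\<in>supp c. c q * wedge2 z (fst q) p - c q * tau (fst q) * ?k)"
    by (simp add: cyc_def right_diff_distrib mult.assoc)
  also have "\<dots> = (\<Sum>q\<in>supp c. c q * wedge2 z (fst q) p) - (\<Sum>q\<in>supp c. c q * tau (fst q)) * ?k"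
    by (simp only: sum_subtractf sum_distrib_right)
  finally have "(\<Sum>q\<in>supp c. c q * cyc (fst q) p) = (\<Sum>q\<in>supp c. c q * wedge2 z (fst q) p)"
    by (simp add: cycle_weighted_sum_eq_0[OF assms])
  then show "alt2 c p = (\<Sum>q\<in>supp c. c q * cyc (fst q) p)"
    by (simp add: alt2_eq_sum_wedge2[OF assms(1)])
qed

end

theorem proposition4p1:
  fixes B :: "'a::ab_group_add \<Rightarrow> 'a \<Rightarrow> int" and z :: 'a
  assumes "alt_bilinear B"
    and "\<exists>y. B z y \<noteq> 0"
  shows "H2_z_vanishes B z"
proof -
  obtain y0 where "B z y0 \<noteq> 0" using assms(2) by blast
  with assms(1) interpret weight_z_nondegenerate B z y0 by unfold_locales
  show ?thesis unfolding H2_z_vanishes_iff using cycle_boundary by blast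
qed

end
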